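(* Let $q\in X^*\setminus\{e\}$, let $q_0$ be the shortest word in $P_q$, and write $q=q_0^k\cdot\bar q$ with $\bar q\sqsubset q_0$ (so $k=\lfloor|q|/|q_0|\rfloor$). Then $\sqrt[*]{P_q}$ is a code having a delay of decipherability of at most $k+1$; that is, for all $w,w',v_1,\dots,v_{k+1}\in\sqrt[*]{P_q}$ and $u\in(\sqrt[*]{P_q})^*$, the relation $w\cdot v_1\cdots v_{k+1}\sqsubseteq w'\cdot u$ implies $w=w'$.
   Context: $X$ is a finite alphabet; $X^*$ the finite words (empty word $e$); $|w|$ is length; $w\sqsubseteq\eta$ means $w$ is a prefix of $\eta$, $w\sqsubset\eta$ a proper prefix. $P_q:=\{v: e\sqsubset v\sqsubseteq q\sqsubset v\cdot q\}$; $q_0$ is its shortest element. The star root is $\sqrt[*]{P_q}:=P_q\setminus(P_q^2\cdot P_q^* )$. A language $C$ is a code if $w_1\cdots w_l=v_1\cdots v_k$ with all $w_i,v_j\in C$ implies $l=k$ and $w_i=v_i$ for all $i$; it has delay of decipherability $m$ if for all $w,w',v_1,\dots,v_m\in C$ and $u\in C^*$, $w\cdot v_1\cdots v_m\sqsubseteq w'\cdot u$ implies $w=w'$. *)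

theory Defs
  imports Main "HOL-Library.Sublist"
begin

(* Words over an alphabet 'a are lists; e = []; \<sqsubseteq> = prefix, \<sqsubset> = strict_prefix. *)

definition Pq :: "'a list \<Rightarrow> 'a list set" where
  "Pq q = {v. strict_prefix [] v \<and> prefix v q \<and> strict_prefix q (v @ q)}"

definition lang_conc :: "'a list set \<Rightarrow> 'a list set \<Rightarrow> 'a list set" where
  "lang_conc A B = {u @ v | u v. u \<in> A \<and> v \<in> B}"

definition lang_star :: "'a list set \<Rightarrow> 'a list set" where
  "lang_star A = {concat ws | ws. set ws \<subseteq> A}"

definition star_root :: "'a list set \<Rightarrow> 'a list set" where
  "star_root P = P - lang_conc (lang_conc P P) (lang_star P)"

definition is_code :: "'a list set \<Rightarrow> bool" where
  "is_code C \<longleftrightarrow> (\<forall>ws vs. set ws \<subseteq> C \<and> set vs \<subseteq> C \<and> concat ws = concat vs \<longrightarrow> ws = vs)"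

definition has_delay :: "'a list set \<Rightarrow> nat \<Rightarrow> bool" where
  "has_delay C m \<longleftrightarrow> (\<forall>w w' vs u. w \<in> C \<and> w' \<in> C \<and> length vs = m \<and> set vs \<subseteq> C
      \<and> u \<in> lang_star C \<and> prefix (w @ concat vs) (w' @ u) \<longrightarrow> w = w')"

end

theory Submission
  imports Defs
begin

(* Call x a period-word of q if q is a prefix of x @ q; the elements of Pq q
   are exactly the nonempty period-words that are prefixes of q, and concatenations of
   period-words are again period-words.  Any two elements of Pq q are prefix-comparable.
   The core fact is that a star-root word w @ s, with w itself in Pq q, cannot arise from a
   nonempty period-word s: otherwise s is in Pq q and w @ s lies in (Pq q)^2.
   Both claims then reduce to comparing the first factors w, w' of two factorisations:
   the longer one is w @ s, and a cancellation lemma shows s is a period-word.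
   For the code property the tails are star words (period-words).  For the delay bound,
   the k+1 factors v_i each have length at least |q0|, so their product is longer than
   q = q0^k qbar and therefore has q as a prefix, which again makes s a period-word. *)

lemma Pq_iff: "v \<in> Pq q \<longleftrightarrow> v \<noteq> [] \<and> prefix v q \<and> prefix q (v @ q)"
  unfolding Pq_def strict_prefix_def by auto

lemma Pq_length_le: "v \<in> Pq q \<Longrightarrow> length v \<le> length q"
  by (simp add: Pq_iff prefix_length_le)

lemma Pq_comparable: "v \<in> Pq q \<Longrightarrow> w \<in> Pq q \<Longrightarrow> prefix v w \<or> prefix w v"
  unfolding Pq_iff using prefix_same_cases by blast

lemma Pq_intro: "s \<noteq> [] \<Longrightarrow> length s \<le> length q \<Longrightarrow> prefix q (s @ q) \<Longrightarrow> s \<in> Pq q"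
  unfolding Pq_iff using prefix_length_prefix[of s "s @ q" q] by simp

lemma concat_period: "set xs \<subseteq> Pq q \<Longrightarrow> prefix q (concat xs @ q)"
proof (induction xs)
  case Nil then show ?case by simp
next
  case (Cons x xs)
  then have "prefix q (x @ q)" and "prefix (x @ q) (x @ concat xs @ q)"
    by (auto simp: Pq_iff)
  then show ?case by (simp add: prefix_order.trans)
qed

lemma lang_star_period: "u \<in> lang_star C \<Longrightarrow> C \<subseteq> Pq q \<Longrightarrow> prefix q (u @ q)"
  unfolding lang_star_def using concat_period by fastforce

lemma period_long_prefix: "prefix q (x @ q) \<Longrightarrow> length q \<le> length x \<Longrightarrow> prefix q x"
  using prefix_length_prefix[of q "x @ q" x] by simp

lemma period_cancel:
  assumes "prefix q (s @ X @ q)" and "prefix q (X @ q)"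
  shows "prefix q (s @ q)"
proof -
  have "prefix (s @ q) (s @ X @ q)" using assms(2) by simp
  then show ?thesis using prefix_length_prefix[OF assms(1)] by simp
qed

lemma star_root_subset: "star_root P \<subseteq> P"
  unfolding star_root_def by auto

lemma product_not_star_root: "w \<in> P \<Longrightarrow> s \<in> P \<Longrightarrow> w @ s \<notin> star_root P"
proof -
  assume "w \<in> P" "s \<in> P"
  moreover have "[] \<in> lang_star P" unfolding lang_star_def by (rule CollectI, rule exI[of _ "[]"]) simp
  ultimately have "w @ s @ [] \<in> lang_conc (lang_conc P P) (lang_star P)"
    unfolding lang_conc_def by blast
  then show ?thesis unfolding star_root_def by simp
qed

lemma star_root_no_period_extension:
  assumes "w \<in> Pq q" and "w @ s \<in> star_root (Pq q)" and "prefix q (s @ q)"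
  shows "s = []"
proof (rule ccontr)
  assume "s \<noteq> []"
  moreover have "length s \<le> length q"
    using Pq_length_le assms(2) star_root_subset by fastforce
  ultimately have "s \<in> Pq q" using assms(3) Pq_intro by blast
  then show False using product_not_star_root[OF assms(1)] assms(2) by blast
qed

lemma star_root_heads_eq:
  assumes root: "w \<in> star_root (Pq q)" "w' \<in> star_root (Pq q)"
    and eq: "w @ x = w' @ y"
    and tails: "prefix q (x @ q)" "prefix q (y @ q)"
  shows "w = w'"
proof -
  have ext: "s = []"
    if "a \<in> star_root (Pq q)" "a @ s \<in> star_root (Pq q)" "a @ X = (a @ s) @ Y"
      "prefix q (X @ q)" "prefix q (Y @ q)" for a s X Y
  proof -
    have "X = s @ Y" using that(3) by simp
    then have "prefix q (s @ q)" using that(4,5) period_cancel by simp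
    then show ?thesis
      using star_root_no_period_extension that(1,2) star_root_subset by blast
  qed
  have "prefix w w' \<or> prefix w' w"
    using Pq_comparable root star_root_subset by blast
  then show ?thesis
  proof
    assume "prefix w w'"
    then obtain s where s: "w' = w @ s" by (auto simp: prefix_def)
    then have "s = []" using ext[of w s x y] root eq tails by simp
    then show ?thesis using s by simp
  next
    assume "prefix w' w"
    then obtain s where s: "w = w' @ s" by (auto simp: prefix_def)
    then have "s = []" using ext[of w' s y x] root eq tails by auto
    then show ?thesis using s by simp
  qed
qed

lemma star_root_Pq_is_code: "is_code (star_root (Pq q))"
  unfolding is_code_def
proof (intro allI impI)
  fix ws vs :: "'a list list"
  assume "set ws \<subseteq> star_root (Pq q) \<and> set vs \<subseteq> star_root (Pq q) \<and> concat ws = concat vs"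
  then show "ws = vs"
  proof (induction ws arbitrary: vs)
    case Nil
    then have "set vs \<subseteq> Pq q" and "concat vs = []"
      using star_root_subset by auto
    then show ?case by (cases vs) (auto simp: Pq_iff)
  next
    case (Cons w ws)
    have "w \<noteq> []" using Cons.prems star_root_subset by (force simp: Pq_iff)
    then obtain w' vs' where vs: "vs = w' # vs'"
      using Cons.prems by (cases vs) auto
    have roots: "set ws \<subseteq> star_root (Pq q)" "set vs' \<subseteq> star_root (Pq q)"
      using Cons.prems vs by auto
    have eq: "w @ concat ws = w' @ concat vs'" using Cons.prems vs by simp
    have "prefix q (concat ws @ q)" "prefix q (concat vs' @ q)"
      using roots star_root_subset concat_period by (meson order_trans)+
    then have "w = w'"
      using star_root_heads_eq[OF _ _ eq] Cons.prems vs by (meson list.set_intros(1) subsetD)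
    moreover have "ws = vs'" using Cons.IH roots eq \<open>w = w'\<close> by simp
    ultimately show ?case using vs by simp
  qed
qed

lemma star_root_Pq_delay:
  assumes long: "\<And>vs. length vs = m \<Longrightarrow> set vs \<subseteq> Pq q \<Longrightarrow> length q \<le> length (concat vs)"
  shows "has_delay (star_root (Pq q)) m"
  unfolding has_delay_def
proof (intro allI impI)
  fix w w' :: "'a list" and vs :: "'a list list" and u
  let ?C = "star_root (Pq q)" and ?V = "concat vs"
  assume "w \<in> ?C \<and> w' \<in> ?C \<and> length vs = m \<and> set vs \<subseteq> ?C
    \<and> u \<in> lang_star ?C \<and> prefix (w @ ?V) (w' @ u)"
  then have root: "w \<in> ?C" "w' \<in> ?C" and vs: "length vs = m" "set vs \<subseteq> Pq q"
    and u: "prefix q (u @ q)" and pre: "prefix (w @ ?V) (w' @ u)"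
    using star_root_subset lang_star_period by blast+
  have V: "prefix q (?V @ q)" using concat_period[OF vs(2)] .
  have lenV: "length q \<le> length ?V" using long vs by blast
  have qV: "prefix q ?V" using period_long_prefix[OF V lenV] .
  have "prefix w w' \<or> prefix w' w"
    using Pq_comparable root star_root_subset by blast
  then show "w = w'"
  proof
    assume "prefix w w'"
    then obtain s where s: "w' = w @ s" by (auto simp: prefix_def)
    then have "prefix ?V (s @ u)" using pre by simp
    then have "prefix q (s @ u @ q)"
      using qV by (metis append_assoc prefix_order.trans prefix_prefix)
    then have "s = []"
      using period_cancel[OF _ u] star_root_no_period_extension root s star_root_subset
      by blast
    then show ?thesis using s by simp
  next
    assume "prefix w' w"
    then obtain s where s: "w = w' @ s" by (auto simp: prefix_def)
    then have sVu: "prefix (s @ ?V) u" using pre by simp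
    then have "length q \<le> length u" using lenV prefix_length_le by fastforce
    then have "prefix q u" using period_long_prefix[OF u] by simp
    then have "prefix q (s @ ?V)"
      using sVu lenV prefix_length_prefix by fastforce
    then have "prefix q (s @ ?V @ q)" by (metis append_assoc prefix_prefix)
    then have "s = []"
      using period_cancel[OF _ V] star_root_no_period_extension root s star_root_subset
      by blast
    then show ?thesis using s by simp
  qed
qed

lemma concat_length_lower:
  "\<forall>x \<in> set vs. m \<le> length x \<Longrightarrow> length vs * m \<le> length (concat vs)"
  by (induction vs) auto

theorem theorem2:
  fixes q q0 qbar :: "'a::finite list" and k :: nat
  assumes "q \<noteq> []"
    and "q0 \<in> Pq q" and "\<forall>v \<in> Pq q. length q0 \<le> length v"
    and "q = concat (replicate k q0) @ qbar" and "strict_prefix qbar q0"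
  shows "is_code (star_root (Pq q)) \<and> has_delay (star_root (Pq q)) (k + 1)"
proof
  show "is_code (star_root (Pq q))" by (rule star_root_Pq_is_code)
  have len_q: "length q < (k + 1) * length q0"
    using assms(4) prefix_length_less[OF assms(5)] by (simp add: length_concat sum_list_replicate)
  show "has_delay (star_root (Pq q)) (k + 1)"
  proof (rule star_root_Pq_delay)
    fix vs :: "'a list list"
    assume "length vs = k + 1" and "set vs \<subseteq> Pq q"
    then have "(k + 1) * length q0 \<le> length (concat vs)"
      using concat_length_lower[of vs "length q0"] assms(3) by auto
    then show "length q \<le> length (concat vs)" using len_q by simp
  qed
qed

end
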